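(* For every $i=1,\dots,n$ and every polygon in $\mathcal P_n$, the derivative of the perimeter $F$ in the direction of $\xi_i$ vanishes: $\xi_i(F)=0$. Thus the distribution $\mathcal D_n$ is tangent to the level hypersurfaces of $F$.
   Context: Let $n\ge3$ and let $\mathcal P_n$ be the $2n$-dimensional manifold of convex $n$-gons in $\mathbb R^2$. A polygon is encoded by the lines of its sides, cyclically ordered counterclockwise (indices mod $n$): $L_i=\{(x,y): x\cos\alpha_i+y\sin\alpha_i=p_i\}$, where $(\cos\alpha_i,\sin\alpha_i)$ is the outer unit normal of the $i$-th side. Thus $(\alpha_1,p_1,\dots,\alpha_n,p_n)$ are local coordinates, with $0<\alpha_{i+1}-\alpha_i<\pi$ (mod $2\pi$) and total turning $2\pi$. The positive side of $L_i$ is the open half-plane into which its outer normal points; the negative side is the other one, which contains the polygon. For each $i$, let $K_i$ be the circle tangent to the three lines $L_{i-1},L_i,L_{i+1}$ that lies on the negative sides of $L_{i-1}$ and $L_{i+1}$ and on the positive side of $L_i$. Let $C_i$ be its tangency point with $L_i$. Let $\xi_i$ be the vector field on $\mathcal P_n$ given by the infinitesimal counterclockwise rotation of the line $L_i$ about the point $C_i$, all other sides fixed. In coordinates, $\xi_i=\partial_{\alpha_i}+\det\big((\cos\alpha_i,\sin\alpha_i),C_i\big)\,\partial_{p_i}$. The distribution $\mathcal D_n$ is spanned by $\xi_1,\dots,\xi_n$. $F:\mathcal P_n\to\mathbb R$ is the perimeter. *)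

theory Defs
  imports "HOL-Analysis.Analysis"
begin

text \<open>Polygon coordinates: sides indexed by 0..n-1 (cyclically, mod n).
  alpha i = direction angle of the outer unit normal of side i, p i = support number.
  Points of the plane are pairs of reals.\<close>

definition cnxt :: "nat \<Rightarrow> nat \<Rightarrow> nat" where
  "cnxt n i = Suc i mod n"

definition cprv :: "nat \<Rightarrow> nat \<Rightarrow> nat" where
  "cprv n i = (i + n - 1) mod n"

definition nrm :: "real \<Rightarrow> real \<times> real" where
  "nrm a = (cos a, sin a)"

definition dotp :: "real \<times> real \<Rightarrow> real \<times> real \<Rightarrow> real" where
  "dotp u v = fst u * fst v + snd u * snd v"

definition det2 :: "real \<times> real \<Rightarrow> real \<times> real \<Rightarrow> real" where
  "det2 u v = fst u * snd v - snd u * fst v"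

definition on_line :: "real \<Rightarrow> real \<Rightarrow> real \<times> real \<Rightarrow> bool" where
  "on_line a c q \<longleftrightarrow> dotp (nrm a) q = c"

definition vertex :: "nat \<Rightarrow> (nat \<Rightarrow> real) \<Rightarrow> (nat \<Rightarrow> real) \<Rightarrow> nat \<Rightarrow> real \<times> real" where
  "vertex n alpha p i =
     (THE q. on_line (alpha i) (p i) q \<and> on_line (alpha (cnxt n i)) (p (cnxt n i)) q)"

definition red_angle :: "real \<Rightarrow> real" where
  "red_angle x = x - 2 * pi * of_int \<lfloor>x / (2 * pi)\<rfloor>"

definition turn :: "nat \<Rightarrow> (nat \<Rightarrow> real) \<Rightarrow> nat \<Rightarrow> real" where
  "turn n alpha i = red_angle (alpha (cnxt n i) - alpha i)"

definition tng :: "real \<Rightarrow> real \<times> real" where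
  "tng a = (- sin a, cos a)"

definition convex_ngon :: "nat \<Rightarrow> (nat \<Rightarrow> real) \<Rightarrow> (nat \<Rightarrow> real) \<Rightarrow> bool" where
  "convex_ngon n alpha p \<longleftrightarrow>
     3 \<le> n \<and>
     (\<forall>i<n. 0 < turn n alpha i \<and> turn n alpha i < pi) \<and>
     (\<Sum>i<n. turn n alpha i) = 2 * pi \<and>
     (\<forall>i<n. dotp (tng (alpha i)) (vertex n alpha p i - vertex n alpha p (cprv n i)) > 0)"

definition perimeter :: "nat \<Rightarrow> (nat \<Rightarrow> real) \<Rightarrow> (nat \<Rightarrow> real) \<Rightarrow> real" where
  "perimeter n alpha p = (\<Sum>i<n. dist (vertex n alpha p (cprv n i)) (vertex n alpha p i))"

text \<open>Circle K_i with centre c and radius r: tangent to L_(i-1), L_i, L_(i+1),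
  lying on the negative sides of L_(i-1), L_(i+1) and on the positive side of L_i.
  (A circle of radius r centred at c is tangent to the line {x. <n,x> = q}
  and lies on its negative side iff q - <n,c> = r; on the positive side iff
  <n,c> - q = r.)\<close>
definition circK :: "nat \<Rightarrow> (nat \<Rightarrow> real) \<Rightarrow> (nat \<Rightarrow> real) \<Rightarrow> nat \<Rightarrow> real \<times> real \<Rightarrow> real \<Rightarrow> bool" where
  "circK n alpha p i c r \<longleftrightarrow>
     r > 0 \<and>
     p (cprv n i) - dotp (nrm (alpha (cprv n i))) c = r \<and>
     p (cnxt n i) - dotp (nrm (alpha (cnxt n i))) c = r \<and>
     dotp (nrm (alpha i)) c - p i = r"

definition tangpt :: "nat \<Rightarrow> (nat \<Rightarrow> real) \<Rightarrow> (nat \<Rightarrow> real) \<Rightarrow> nat \<Rightarrow> real \<times> real" where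
  "tangpt n alpha p i =
     (THE C. \<exists>c r. circK n alpha p i c r \<and> on_line (alpha i) (p i) C \<and> dist c C = r)"

end

theory Submission
  imports Defs
begin

text \<open>Near a convex polygon the length of each side is linear in the support numbers,
  and summing gives F = (\<Sum>k. (p k + p (k+1)) * tan (\<theta> k / 2)) with \<theta> k = \<alpha> (k+1) - \<alpha> k.
  Moving L i changes only the terms k = i - 1 and k = i. In the orthonormal frame
  (nrm (\<alpha> i), tng (\<alpha> i)) the centre of K i has coordinates (p i + r, s), where r is
  its radius and s = det (nrm (\<alpha> i), C i); tangency to L (i-1) and L (i+1) then expresses
  p (i-1) and p (i+1) through r, p i and s. With these relations the derivatives of the two
  terms along \<xi> i are r + p i and -(r + p i), which cancel.\<close>

lemma dotp_add_right: "dotp u (v + w) = dotp u v + dotp u w"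
  by (simp add: dotp_def algebra_simps)

lemma dotp_diff_right: "dotp u (v - w) = dotp u v - dotp u w"
  by (simp add: dotp_def algebra_simps)

lemma dotp_scaleR_right: "dotp u (r *\<^sub>R v) = r * dotp u v"
  by (simp add: dotp_def algebra_simps)

lemma dotp_frame [simp]:
  "dotp (nrm a) (nrm a) = 1" "dotp (tng a) (tng a) = 1"
  "dotp (nrm a) (tng a) = 0" "dotp (tng a) (nrm a) = 0"
  by (simp_all add: dotp_def nrm_def tng_def flip: power2_eq_square)

lemma eq_iff_frame_coords:
  "X = Y \<longleftrightarrow> dotp (nrm a) X = dotp (nrm a) Y \<and> dotp (tng a) X = dotp (tng a) Y"
proof
  assume h: "dotp (nrm a) X = dotp (nrm a) Y \<and> dotp (tng a) X = dotp (tng a) Y"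
  have "fst Z = cos a * dotp (nrm a) Z - sin a * dotp (tng a) Z"
    and "snd Z = sin a * dotp (nrm a) Z + cos a * dotp (tng a) Z" for Z :: "real \<times> real"
    by (simp_all add: dotp_def nrm_def tng_def) (use sin_cos_squared_add[of a] in algebra)+
  with h show "X = Y" by (metis prod_eq_iff)
qed simp

lemma dotp_nrm_rotate:
  "dotp (nrm b) X = cos (b - a) * dotp (nrm a) X + sin (b - a) * dotp (tng a) X"
  by (simp add: dotp_def nrm_def tng_def cos_diff sin_diff) (use sin_cos_squared_add[of a] in algebra)

lemma dist_frame: "dist X Y = sqrt ((dotp (nrm a) (X - Y))\<^sup>2 + (dotp (tng a) (X - Y))\<^sup>2)"
proof -
  have "(dotp (nrm a) Z)\<^sup>2 + (dotp (tng a) Z)\<^sup>2 = (fst Z)\<^sup>2 + (snd Z)\<^sup>2" for Z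
    by (simp add: dotp_def nrm_def tng_def) (use sin_cos_squared_add[of a] in algebra)
  then show ?thesis by (cases X, cases Y) (simp add: dist_Pair_Pair dist_real_def)
qed

lemma det2_nrm: "det2 (nrm a) X = dotp (tng a) X"
  by (simp add: det2_def dotp_def nrm_def tng_def)

lemma on_lines_iff:
  assumes "sin (b - a) \<noteq> 0"
  shows "on_line a p X \<and> on_line b q X \<longleftrightarrow>
    dotp (nrm a) X = p \<and> dotp (tng a) X = (q - p * cos (b - a)) / sin (b - a)"
  using dotp_nrm_rotate[of b X a] assms unfolding on_line_def by (auto simp: field_simps)

lemma ex1_on_lines:
  assumes "sin (b - a) \<noteq> 0"
  shows "\<exists>!X. on_line a p X \<and> on_line b q X"
proof (rule ex1I)
  let ?X = "p *\<^sub>R nrm a + ((q - p * cos (b - a)) / sin (b - a)) *\<^sub>R tng a"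
  show "on_line a p ?X \<and> on_line b q ?X"
    unfolding on_lines_iff[OF assms] dotp_add_right dotp_scaleR_right by simp
  show "Y = ?X" if "on_line a p Y \<and> on_line b q Y" for Y
    using that unfolding on_lines_iff[OF assms] eq_iff_frame_coords[of Y ?X a]
    by (simp add: dotp_add_right dotp_scaleR_right)
qed

lemma cnxt_less: "0 < n \<Longrightarrow> cnxt n k < n"
  by (simp add: cnxt_def)

lemma cprv_less: "0 < n \<Longrightarrow> cprv n k < n"
  by (simp add: cprv_def)

lemma cnxt_cprv: "k < n \<Longrightarrow> cnxt n (cprv n k) = k"
  by (cases k) (auto simp: cnxt_def cprv_def mod_Suc_eq)

lemma cprv_cnxt: "k < n \<Longrightarrow> cprv n (cnxt n k) = k"
  by (auto simp: cnxt_def cprv_def mod_if)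

lemma cprv_neq: "2 \<le> n \<Longrightarrow> k < n \<Longrightarrow> cprv n k \<noteq> k"
  by (auto simp: cprv_def mod_if)

lemma cnxt_neq: "2 \<le> n \<Longrightarrow> k < n \<Longrightarrow> cnxt n k \<noteq> k"
  by (auto simp: cnxt_def mod_if)

lemma sum_cprv_reindex: "(\<Sum>k<n. f (cprv n k)) = (\<Sum>k<n. f k)"
  by (rule sum.reindex_bij_witness[where i = "cnxt n" and j = "cprv n"])
    (auto simp: cnxt_cprv cprv_cnxt cnxt_less cprv_less)

lemma vertex_on_lines:
  assumes "sin (alpha (cnxt n k) - alpha k) \<noteq> 0"
  shows "on_line (alpha k) (p k) (vertex n alpha p k)
    \<and> on_line (alpha (cnxt n k)) (p (cnxt n k)) (vertex n alpha p k)"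
  unfolding vertex_def by (rule theI'[OF ex1_on_lines[OF assms]])

lemma dotp_tng_vertex:
  assumes "sin (alpha (cnxt n k) - alpha k) \<noteq> 0"
  shows "dotp (tng (alpha k)) (vertex n alpha p k) =
    (p (cnxt n k) - p k * cos (alpha (cnxt n k) - alpha k)) / sin (alpha (cnxt n k) - alpha k)"
  using vertex_on_lines[OF assms] unfolding on_lines_iff[OF assms] by simp

lemma dotp_tng_cnxt_vertex:
  assumes "sin (alpha (cnxt n k) - alpha k) \<noteq> 0"
  shows "dotp (tng (alpha (cnxt n k))) (vertex n alpha p k) =
    (p (cnxt n k) * cos (alpha (cnxt n k) - alpha k) - p k) / sin (alpha (cnxt n k) - alpha k)"
proof -
  have "sin (alpha k - alpha (cnxt n k)) = - sin (alpha (cnxt n k) - alpha k)"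
    "cos (alpha k - alpha (cnxt n k)) = cos (alpha (cnxt n k) - alpha k)"
    by (simp_all add: sin_diff cos_diff)
  with vertex_on_lines[OF assms]
    on_lines_iff[of "alpha k" "alpha (cnxt n k)" "p (cnxt n k)" "vertex n alpha p k" "p k"] assms
  show ?thesis by (auto simp: field_simps)
qed

text \<open>An explicit formula rather than a distance of vertices, so that it depends
  continuously on the coordinates; side_length_eq relates the two.\<close>
definition side_length :: "nat \<Rightarrow> (nat \<Rightarrow> real) \<Rightarrow> (nat \<Rightarrow> real) \<Rightarrow> nat \<Rightarrow> real" where
  "side_length n alpha p k =
     (p (cnxt n k) - p k * cos (alpha (cnxt n k) - alpha k)) / sin (alpha (cnxt n k) - alpha k)
   + (p (cprv n k) - p k * cos (alpha k - alpha (cprv n k))) / sin (alpha k - alpha (cprv n k))"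

lemma side_length_eq:
  assumes "k < n" and "sin (alpha (cnxt n k) - alpha k) \<noteq> 0"
    and "sin (alpha k - alpha (cprv n k)) \<noteq> 0"
  shows "dotp (tng (alpha k)) (vertex n alpha p k - vertex n alpha p (cprv n k)) =
      side_length n alpha p k" (is "?l = _")
    and "dist (vertex n alpha p (cprv n k)) (vertex n alpha p k) = \<bar>side_length n alpha p k\<bar>"
proof -
  have prev: "sin (alpha (cnxt n (cprv n k)) - alpha (cprv n k)) \<noteq> 0"
    using assms by (simp add: cnxt_cprv)
  show "?l = side_length n alpha p k"
    using dotp_tng_vertex[OF assms(2)] dotp_tng_cnxt_vertex[OF prev] assms
    by (simp add: dotp_diff_right side_length_def cnxt_cprv diff_divide_distrib)
  moreover have "dotp (nrm (alpha k)) (vertex n alpha p (cprv n k) - vertex n alpha p k) = 0"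
    using vertex_on_lines[OF assms(2)] vertex_on_lines[OF prev] assms(1)
    by (simp add: dotp_diff_right on_line_def cnxt_cprv)
  moreover have "dotp (tng (alpha k)) (vertex n alpha p (cprv n k) - vertex n alpha p k) = - ?l"
    by (simp add: dotp_diff_right)
  ultimately show "dist (vertex n alpha p (cprv n k)) (vertex n alpha p k) = \<bar>side_length n alpha p k\<bar>"
    by (simp add: dist_frame[of _ _ "alpha k"])
qed

lemma sum_side_length:
  "(\<Sum>k<n. side_length n alpha p k) =
   (\<Sum>k<n. (p k + p (cnxt n k)) * ((1 - cos (alpha (cnxt n k) - alpha k)) / sin (alpha (cnxt n k) - alpha k)))"
proof -
  define \<theta> where "\<theta> k = alpha (cnxt n k) - alpha k" for k
  define b where "b j = (p j - p (cnxt n j) * cos (\<theta> j)) / sin (\<theta> j)" for j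
  have "(\<Sum>k<n. side_length n alpha p k) =
      (\<Sum>k<n. (p (cnxt n k) - p k * cos (\<theta> k)) / sin (\<theta> k)) + (\<Sum>k<n. b (cprv n k))"
    unfolding sum.distrib[symmetric] side_length_def \<theta>_def b_def
    by (rule sum.cong) (simp_all add: cnxt_cprv)
  also have "\<dots> = (\<Sum>k<n. (p k + p (cnxt n k)) * ((1 - cos (\<theta> k)) / sin (\<theta> k)))"
    unfolding sum_cprv_reindex[of b] unfolding sum.distrib[symmetric] b_def
    by (rule sum.cong) (simp_all add: add_divide_distrib[symmetric] algebra_simps)
  finally show ?thesis unfolding \<theta>_def .
qed

lemma tan_half_angle: "sin \<theta> \<noteq> 0 \<Longrightarrow> tan (\<theta> / 2) = (1 - cos \<theta>) / sin \<theta>"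
  using sin_double[of "\<theta> / 2"] cos_double_sin[of "\<theta> / 2"]
  by (simp add: tan_def power2_eq_square field_simps)

lemma perimeter_eq_sum_tan_half:
  assumes "\<And>k. k < n \<Longrightarrow> sin (alpha (cnxt n k) - alpha k) \<noteq> 0"
    and "\<And>k. k < n \<Longrightarrow> 0 \<le> side_length n alpha p k"
  shows "perimeter n alpha p = (\<Sum>k<n. (p k + p (cnxt n k)) * tan ((alpha (cnxt n k) - alpha k) / 2))"
proof -
  have "sin (alpha k - alpha (cprv n k)) \<noteq> 0" if "k < n" for k
    using assms(1)[of "cprv n k"] cprv_less[of n k] that by (simp add: cnxt_cprv)
  then have "perimeter n alpha p = (\<Sum>k<n. side_length n alpha p k)"
    unfolding perimeter_def using assms by (intro sum.cong) (simp_all add: side_length_eq)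
  also have "\<dots> = (\<Sum>k<n. (p k + p (cnxt n k)) * tan ((alpha (cnxt n k) - alpha k) / 2))"
    unfolding sum_side_length using assms(1) by (intro sum.cong) (simp_all add: tan_half_angle)
  finally show ?thesis .
qed

lemma circle_center_eq:
  assumes "on_line a q C" and "dotp (nrm a) c - q = r" and "dist c C = r"
  shows "c = C + r *\<^sub>R nrm a"
proof -
  have "r = sqrt (r\<^sup>2 + (dotp (tng a) (c - C))\<^sup>2)"
    using assms dist_frame[of c C a] by (simp add: dotp_diff_right on_line_def)
  moreover have "0 \<le> r" using assms(3) by auto
  ultimately have "dotp (tng a) (c - C) = 0"
    by (metis add_cancel_left_right real_sqrt_abs real_sqrt_eq_iff zero_eq_power2 abs_of_nonneg)
  with assms(1,2) show ?thesis
    unfolding eq_iff_frame_coords[of c _ a]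
    by (simp add: dotp_add_right dotp_scaleR_right dotp_diff_right on_line_def)
qed

lemma dist_add_scaleR_nrm: "0 \<le> r \<Longrightarrow> dist (C + r *\<^sub>R nrm a) C = r"
  by (simp add: dist_norm nrm_def norm_Pair power_mult_distrib flip: distrib_left)

text \<open>In the frame of L a1, the tangency conditions become two linear equations for the
  radius r and the coordinate dotp (tng a1) C of the tangency point.\<close>
lemma tangency_point_iff:
  "(\<exists>c r. (r > 0 \<and> p0 - dotp (nrm a0) c = r \<and> p2 - dotp (nrm a2) c = r \<and> dotp (nrm a1) c - p1 = r)
      \<and> on_line a1 p1 C \<and> dist c C = r)
   \<longleftrightarrow> on_line a1 p1 C \<and>
     (\<exists>r>0. p0 - p1 * cos (a1 - a0) = r * (1 + cos (a1 - a0)) - dotp (tng a1) C * sin (a1 - a0)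
         \<and> p2 - p1 * cos (a2 - a1) = r * (1 + cos (a2 - a1)) + dotp (tng a1) C * sin (a2 - a1))"
    (is "?circle \<longleftrightarrow> _ \<and> (\<exists>r>0. ?eqs r)")
proof -
  have dotp_center: "dotp (nrm b) (C + r *\<^sub>R nrm a1) =
      cos (b - a1) * (p1 + r) + sin (b - a1) * dotp (tng a1) C" if "on_line a1 p1 C" for b r
    using that dotp_nrm_rotate[of b "C + r *\<^sub>R nrm a1" a1]
    by (simp add: dotp_add_right dotp_scaleR_right on_line_def)
  have flip: "cos (a0 - a1) = cos (a1 - a0)" "sin (a0 - a1) = - sin (a1 - a0)"
    by (simp_all add: cos_diff sin_diff)
  show ?thesis
  proof
    assume ?circle
    then obtain c r where r: "r > 0" "p0 - dotp (nrm a0) c = r" "p2 - dotp (nrm a2) c = r"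
      "dotp (nrm a1) c - p1 = r" and C: "on_line a1 p1 C" "dist c C = r"
      by blast
    have "c = C + r *\<^sub>R nrm a1" using circle_center_eq[OF C(1) r(4) C(2)] .
    with r C(1) have "?eqs r"
      using dotp_center[of a0 r] dotp_center[of a2 r] flip by (simp add: algebra_simps)
    with r C(1) show "on_line a1 p1 C \<and> (\<exists>r>0. ?eqs r)" by blast
  next
    assume "on_line a1 p1 C \<and> (\<exists>r>0. ?eqs r)"
    then obtain r where C: "on_line a1 p1 C" and r: "r > 0" "?eqs r" by blast
    have "dotp (nrm a1) (C + r *\<^sub>R nrm a1) - p1 = r"
      using C by (simp add: dotp_add_right dotp_scaleR_right on_line_def)
    with r C show ?circle
      using dotp_center[of a0 r] dotp_center[of a2 r] flip dist_add_scaleR_nrm[of r C a1]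
      by (intro exI[of _ "C + r *\<^sub>R nrm a1"] exI[of _ r]) (simp add: algebra_simps)
  qed
qed

lemma one_plus_cos_pos:
  fixes x :: real
  assumes "sin x \<noteq> 0"
  shows "0 < 1 + cos x"
proof -
  have "cos x \<noteq> -1"
  proof
    assume "cos x = -1"
    then have "(sin x)\<^sup>2 = 0" using sin_squared_eq[of x] by simp
    with assms show False by simp
  qed
  then show ?thesis using cos_ge_minus_one[of x] by linarith
qed

lemma ex1_tangency_point:
  assumes sin0: "0 < sin (a1 - a0)" and sin2: "0 < sin (a2 - a1)"
    and side: "0 < (p2 - p1 * cos (a2 - a1)) / sin (a2 - a1) + (p0 - p1 * cos (a1 - a0)) / sin (a1 - a0)"
  shows "\<exists>!C. \<exists>c r. (r > 0 \<and> p0 - dotp (nrm a0) c = r \<and> p2 - dotp (nrm a2) c = r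
      \<and> dotp (nrm a1) c - p1 = r) \<and> on_line a1 p1 C \<and> dist c C = r"
  unfolding tangency_point_iff
proof -
  define \<phi> \<psi> where "\<phi> = a1 - a0" and "\<psi> = a2 - a1"
  define e0 e2 where "e0 = p0 - p1 * cos \<phi>" and "e2 = p2 - p1 * cos \<psi>"
  define D where "D = sin \<psi> * (1 + cos \<phi>) + sin \<phi> * (1 + cos \<psi>)"
  have "D > 0"
    unfolding D_def \<phi>_def \<psi>_def using sin0 sin2 one_plus_cos_pos[of "a1 - a0"] one_plus_cos_pos[of "a2 - a1"]
    by (simp add: add_pos_pos)
  define s r where "s = (e2 * (1 + cos \<phi>) - e0 * (1 + cos \<psi>)) / D"
    and "r = (e0 * sin \<psi> + e2 * sin \<phi>) / D"
  have "e0 * sin \<psi> + e2 * sin \<phi> = sin \<phi> * sin \<psi> * (e2 / sin \<psi> + e0 / sin \<phi>)"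
    using sin0 sin2 unfolding \<phi>_def \<psi>_def by (simp add: field_simps)
  then have "r > 0"
    unfolding r_def using \<open>D > 0\<close> sin0 sin2 side by (simp add: e0_def e2_def \<phi>_def \<psi>_def)
  let ?C = "p1 *\<^sub>R nrm a1 + s *\<^sub>R tng a1"
  show "\<exists>!C. on_line a1 p1 C \<and> (\<exists>r>0. p0 - p1 * cos \<phi> = r * (1 + cos \<phi>) - dotp (tng a1) C * sin \<phi>
      \<and> p2 - p1 * cos \<psi> = r * (1 + cos \<psi>) + dotp (tng a1) C * sin \<psi>)"
  proof (rule ex1I)
    have "r * (1 + cos \<phi>) - s * sin \<phi> = e0 * D / D" "r * (1 + cos \<psi>) + s * sin \<psi> = e2 * D / D"
      using \<open>D > 0\<close> unfolding r_def s_def by (simp_all add: field_simps) (simp_all add: D_def algebra_simps)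
    then have "e0 = r * (1 + cos \<phi>) - s * sin \<phi>" "e2 = r * (1 + cos \<psi>) + s * sin \<psi>"
      using \<open>D > 0\<close> by simp_all
    with \<open>r > 0\<close> show "on_line a1 p1 ?C \<and> (\<exists>r>0. p0 - p1 * cos \<phi> = r * (1 + cos \<phi>) - dotp (tng a1) ?C * sin \<phi>
      \<and> p2 - p1 * cos \<psi> = r * (1 + cos \<psi>) + dotp (tng a1) ?C * sin \<psi>)"
      by (auto simp: on_line_def dotp_add_right dotp_scaleR_right e0_def e2_def)
  next
    fix C
    assume "on_line a1 p1 C \<and> (\<exists>r>0. p0 - p1 * cos \<phi> = r * (1 + cos \<phi>) - dotp (tng a1) C * sin \<phi>
      \<and> p2 - p1 * cos \<psi> = r * (1 + cos \<psi>) + dotp (tng a1) C * sin \<psi>)"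
    then obtain r' where C: "on_line a1 p1 C"
      and e0: "e0 = r' * (1 + cos \<phi>) - dotp (tng a1) C * sin \<phi>"
      and e2: "e2 = r' * (1 + cos \<psi>) + dotp (tng a1) C * sin \<psi>"
      unfolding e0_def e2_def by blast
    have "dotp (tng a1) C * D = e2 * (1 + cos \<phi>) - e0 * (1 + cos \<psi>)"
      unfolding D_def e0 e2 by (simp add: algebra_simps)
    then have "dotp (tng a1) C = s" unfolding s_def using \<open>D > 0\<close> by (simp add: field_simps)
    with C show "C = ?C"
      unfolding eq_iff_frame_coords[of C _ a1] by (simp add: on_line_def dotp_add_right dotp_scaleR_right)
  qed
qed

lemma sin_turn: "sin (turn n alpha k) = sin (alpha (cnxt n k) - alpha k)"
  by (simp add: turn_def red_angle_def sin_diff)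

lemma convex_ngon_sin_pos:
  assumes "convex_ngon n alpha p" and "k < n"
  shows "0 < sin (alpha (cnxt n k) - alpha k)"
  using assms sin_gt_zero[of "turn n alpha k"] unfolding convex_ngon_def sin_turn by auto

lemma convex_ngon_side_length_pos:
  assumes "convex_ngon n alpha p" and "k < n"
  shows "0 < side_length n alpha p k"
proof -
  have "0 < sin (alpha k - alpha (cprv n k))"
    using convex_ngon_sin_pos[OF assms(1) cprv_less[of n k]] assms(2) by (simp add: cnxt_cprv)
  with assms convex_ngon_sin_pos[OF assms] show ?thesis
    unfolding convex_ngon_def by (simp add: side_length_eq(1)[symmetric])
qed

lemma tangpt_relations:
  assumes "convex_ngon n alpha p" and "i < n"
  obtains r where
    "p (cprv n i) - p i * cos (alpha i - alpha (cprv n i)) =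
       r * (1 + cos (alpha i - alpha (cprv n i)))
       - det2 (nrm (alpha i)) (tangpt n alpha p i) * sin (alpha i - alpha (cprv n i))"
    "p (cnxt n i) - p i * cos (alpha (cnxt n i) - alpha i) =
       r * (1 + cos (alpha (cnxt n i) - alpha i))
       + det2 (nrm (alpha i)) (tangpt n alpha p i) * sin (alpha (cnxt n i) - alpha i)"
proof -
  have "0 < sin (alpha i - alpha (cprv n i))"
    using convex_ngon_sin_pos[OF assms(1) cprv_less[of n i]] assms(2) by (simp add: cnxt_cprv)
  then have "\<exists>!C. \<exists>c r. circK n alpha p i c r \<and> on_line (alpha i) (p i) C \<and> dist c C = r"
    unfolding circK_def
    using convex_ngon_sin_pos[OF assms] convex_ngon_side_length_pos[OF assms]
    by (intro ex1_tangency_point) (simp_all add: side_length_def)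
  then have "\<exists>c r. circK n alpha p i c r \<and> on_line (alpha i) (p i) (tangpt n alpha p i)
      \<and> dist c (tangpt n alpha p i) = r"
    unfolding tangpt_def by (rule theI')
  with that show ?thesis
    unfolding circK_def tangency_point_iff det2_nrm by blast
qed

lemma perimeter_terms_stationary:
  fixes a0 a1 a2 A P B r s :: real
  assumes "sin (a1 - a0) \<noteq> 0" and "sin (a2 - a1) \<noteq> 0"
    and "A - P * cos (a1 - a0) = r * (1 + cos (a1 - a0)) - s * sin (a1 - a0)"
    and "B - P * cos (a2 - a1) = r * (1 + cos (a2 - a1)) + s * sin (a2 - a1)"
  shows "((\<lambda>t. (A + (P + t * s)) * tan ((a1 + t - a0) / 2) + (P + t * s + B) * tan ((a2 - (a1 + t)) / 2))
    has_real_derivative 0) (at 0)"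
proof -
  have cos_half: "cos (\<theta> / 2) \<noteq> 0" if "sin \<theta> \<noteq> 0" for \<theta> :: real
    using that sin_double[of "\<theta> / 2"] by auto
  have half: "(A + P) / (2 * (cos (\<theta> / 2))\<^sup>2) = r + P - s * tan (\<theta> / 2)"
    if "sin \<theta> \<noteq> 0" and "A - P * cos \<theta> = r * (1 + cos \<theta>) - s * sin \<theta>" for A s \<theta> :: real
  proof -
    have "A + P = (P + r) * (1 + cos \<theta>) - s * sin \<theta>"
      using that(2) by (simp add: algebra_simps)
    also have "\<dots> = 2 * (cos (\<theta> / 2))\<^sup>2 * (r + P) - 2 * s * sin (\<theta> / 2) * cos (\<theta> / 2)"
      using cos_double_cos[of "\<theta> / 2"] sin_double[of "\<theta> / 2"] by (simp add: algebra_simps)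
    finally have "(A + P) / (2 * (cos (\<theta> / 2))\<^sup>2) =
        (2 * (cos (\<theta> / 2))\<^sup>2 * (r + P) - 2 * s * sin (\<theta> / 2) * cos (\<theta> / 2)) / (2 * (cos (\<theta> / 2))\<^sup>2)"
      by simp
    also have "\<dots> = r + P - s * tan (\<theta> / 2)"
      using cos_half[OF that(1)] by (simp add: tan_def field_simps power2_eq_square)
    finally show ?thesis .
  qed
  have "((\<lambda>t. (A + (P + t * s)) * tan ((a1 + t - a0) / 2) + (P + t * s + B) * tan ((a2 - (a1 + t)) / 2))
    has_real_derivative
      s * tan ((a1 - a0) / 2) + (A + P) / (2 * (cos ((a1 - a0) / 2))\<^sup>2)
      + (s * tan ((a2 - a1) / 2) - (P + B) / (2 * (cos ((a2 - a1) / 2))\<^sup>2))) (at 0)"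
    using cos_half[OF assms(1)] cos_half[OF assms(2)]
    by (auto intro!: derivative_eq_intros DERIV_chain2[OF DERIV_tan] simp: field_simps)
  moreover have "(P + B) / (2 * (cos ((a2 - a1) / 2))\<^sup>2) = r + P + s * tan ((a2 - a1) / 2)"
    using half[of "a2 - a1" B "- s"] assms(2,4) by (simp add: add.commute)
  ultimately show ?thesis
    using half[OF assms(1,3)] by simp
qed

lemma sum_cyclic_fun_upd:
  fixes E :: "'a \<Rightarrow> 'a \<Rightarrow> 'b::comm_monoid_add"
  assumes "2 \<le> n" and "i < n"
  shows "(\<Sum>k<n. E ((x(i := y)) k) ((x(i := y)) (cnxt n k))) =
    E (x (cprv n i)) y + E y (x (cnxt n i)) + (\<Sum>k\<in>{..<n} - {cprv n i, i}. E (x k) (x (cnxt n k)))"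
proof -
  have neq: "cprv n i \<noteq> i" "cnxt n i \<noteq> i" using assms by (simp_all add: cprv_neq cnxt_neq)
  have sub: "{cprv n i, i} \<subseteq> {..<n}" using assms by (simp add: cprv_less)
  have "cnxt n k \<noteq> i" if "k \<in> {..<n} - {cprv n i, i}" for k
    using that cprv_cnxt[of k n] by auto
  then have "(\<Sum>k\<in>{..<n} - {cprv n i, i}. E ((x(i := y)) k) ((x(i := y)) (cnxt n k))) =
      (\<Sum>k\<in>{..<n} - {cprv n i, i}. E (x k) (x (cnxt n k)))"
    by (intro sum.cong) auto
  then show ?thesis
    using sum.subset_diff[OF sub, of "\<lambda>k. E ((x(i := y)) k) ((x(i := y)) (cnxt n k))"] neq assms(2)
    by (simp add: cnxt_cprv add.commute)
qed

lemma eventually_perimeter_eq_sum_tan_half: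
  fixes F :: "'a::t2_space filter" \<comment> \<open>t2_space is needed only by tendsto_sin\<close>
  assumes "\<And>k. k < n \<Longrightarrow> sin (alpha (cnxt n k) - alpha k) \<noteq> 0"
    and "\<And>k. k < n \<Longrightarrow> 0 < side_length n alpha p k"
    and "\<And>k. ((\<lambda>x. A x k) \<longlongrightarrow> alpha k) F" and "\<And>k. ((\<lambda>x. P x k) \<longlongrightarrow> p k) F"
  shows "\<forall>\<^sub>F x in F. perimeter n (A x) (P x) =
    (\<Sum>k<n. (P x k + P x (cnxt n k)) * tan ((A x (cnxt n k) - A x k) / 2))"
proof -
  have sin_prev: "sin (alpha k - alpha (cprv n k)) \<noteq> 0" if "k < n" for k
    using assms(1)[of "cprv n k"] cprv_less[of n k] that by (simp add: cnxt_cprv)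
  have "\<forall>\<^sub>F x in F. sin (A x (cnxt n k) - A x k) \<noteq> 0 \<and> 0 \<le> side_length n (A x) (P x) k"
    if "k < n" for k
  proof (rule eventually_conj)
    have "((\<lambda>x. sin (A x (cnxt n k) - A x k)) \<longlongrightarrow> sin (alpha (cnxt n k) - alpha k)) F"
      using assms(3) by (intro tendsto_intros) auto
    then show "\<forall>\<^sub>F x in F. sin (A x (cnxt n k) - A x k) \<noteq> 0"
      using assms(1)[OF that] by (rule tendsto_imp_eventually_ne)
    have "((\<lambda>x. side_length n (A x) (P x) k) \<longlongrightarrow> side_length n alpha p k) F"
      unfolding side_length_def using assms(1,3,4) sin_prev that by (intro tendsto_intros) auto
    from order_tendstoD(1)[OF this assms(2)[OF that]]
    show "\<forall>\<^sub>F x in F. 0 \<le> side_length n (A x) (P x) k"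
      by (rule eventually_mono) simp
  qed
  then have "\<forall>\<^sub>F x in F. \<forall>k\<in>{..<n}. sin (A x (cnxt n k) - A x k) \<noteq> 0 \<and> 0 \<le> side_length n (A x) (P x) k"
    by (intro eventually_ball_finite) auto
  then show ?thesis
    by (rule eventually_mono) (simp add: perimeter_eq_sum_tan_half)
qed

lemma tendsto_fun_upd:
  "((\<lambda>x. g x) \<longlongrightarrow> f i) F \<Longrightarrow> ((\<lambda>x. (f(i := g x)) k) \<longlongrightarrow> f k) F"
  by (cases "k = i") simp_all

lemma eventually_perimeter_fun_upd_eq:
  assumes "convex_ngon n alpha p" and "i < n"
  obtains rest where "\<forall>\<^sub>F t in nhds 0. perimeter n (alpha(i := alpha i + t)) (p(i := p i + t * s)) =
      (p (cprv n i) + (p i + t * s)) * tan ((alpha i + t - alpha (cprv n i)) / 2)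
    + (p i + t * s + p (cnxt n i)) * tan ((alpha (cnxt n i) - (alpha i + t)) / 2) + rest"
proof -
  have "2 \<le> n" using assms(1) by (simp add: convex_ngon_def)
  define x where "x k = (alpha k, p k)" for k
  define E :: "real \<times> real \<Rightarrow> real \<times> real \<Rightarrow> real"
    where "E = (\<lambda>(a, q) (b, q'). (q + q') * tan ((b - a) / 2))"
  have "\<forall>\<^sub>F t in nhds 0. perimeter n (alpha(i := alpha i + t)) (p(i := p i + t * s)) =
      (\<Sum>k<n. E ((x(i := (alpha i + t, p i + t * s))) k) ((x(i := (alpha i + t, p i + t * s))) (cnxt n k)))"
  proof (rule eventually_mono)
    show "\<forall>\<^sub>F t in nhds 0. perimeter n (alpha(i := alpha i + t)) (p(i := p i + t * s)) =
      (\<Sum>k<n. ((p(i := p i + t * s)) k + (p(i := p i + t * s)) (cnxt n k))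
         * tan (((alpha(i := alpha i + t)) (cnxt n k) - (alpha(i := alpha i + t)) k) / 2))"
    proof (rule eventually_perimeter_eq_sum_tan_half)
      show "((\<lambda>t. (alpha(i := alpha i + t)) k) \<longlongrightarrow> alpha k) (nhds 0)"
        and "((\<lambda>t. (p(i := p i + t * s)) k) \<longlongrightarrow> p k) (nhds 0)" for k
        by (rule tendsto_fun_upd; auto intro!: tendsto_eq_intros filterlim_ident)+
    qed (use convex_ngon_sin_pos[OF assms(1)] convex_ngon_side_length_pos[OF assms(1)] in fastforce)+
  qed (auto simp: E_def x_def intro!: sum.cong)
  then show thesis
    unfolding sum_cyclic_fun_upd[OF \<open>2 \<le> n\<close> assms(2)]
    by (intro that[of "\<Sum>k\<in>{..<n} - {cprv n i, i}. E (x k) (x (cnxt n k))"]) (simp add: E_def x_def)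
qed

theorem mainTheorem7:
  fixes n :: nat and alpha p :: "nat \<Rightarrow> real" and i :: nat
  assumes "convex_ngon n alpha p" and "i < n"
  shows "((\<lambda>t. perimeter n (alpha(i := alpha i + t))
                 (p(i := p i + t * det2 (nrm (alpha i)) (tangpt n alpha p i))))
          has_real_derivative 0) (at 0)"
proof -
  define s where "s = det2 (nrm (alpha i)) (tangpt n alpha p i)"
  obtain r where tangency:
    "p (cprv n i) - p i * cos (alpha i - alpha (cprv n i)) =
       r * (1 + cos (alpha i - alpha (cprv n i))) - s * sin (alpha i - alpha (cprv n i))"
    "p (cnxt n i) - p i * cos (alpha (cnxt n i) - alpha i) =
       r * (1 + cos (alpha (cnxt n i) - alpha i)) + s * sin (alpha (cnxt n i) - alpha i)"
    using tangpt_relations[OF assms] unfolding s_def by blast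
  have "sin (alpha i - alpha (cprv n i)) > 0" "sin (alpha (cnxt n i) - alpha i) > 0"
    using convex_ngon_sin_pos[OF assms(1) cprv_less[of n i]] convex_ngon_sin_pos[OF assms] assms(2)
    by (simp_all add: cnxt_cprv)
  then have "((\<lambda>t. (p (cprv n i) + (p i + t * s)) * tan ((alpha i + t - alpha (cprv n i)) / 2)
      + (p i + t * s + p (cnxt n i)) * tan ((alpha (cnxt n i) - (alpha i + t)) / 2) + rest)
      has_real_derivative 0) (at 0)" for rest
    using DERIV_add[OF perimeter_terms_stationary[OF _ _ tangency] DERIV_const] by simp
  moreover obtain rest where "\<forall>\<^sub>F t in nhds 0. perimeter n (alpha(i := alpha i + t)) (p(i := p i + t * s)) =
      (p (cprv n i) + (p i + t * s)) * tan ((alpha i + t - alpha (cprv n i)) / 2)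
    + (p i + t * s + p (cnxt n i)) * tan ((alpha (cnxt n i) - (alpha i + t)) / 2) + rest"
    using eventually_perimeter_fun_upd_eq[OF assms] .
  ultimately show ?thesis
    unfolding s_def[symmetric] by (simp add: DERIV_cong_ev)
qed

end
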